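(* Let $F=\{\mathbf{p}_0,\ldots,\mathbf{p}_n\}\subset\mathbb{R}^d$ be not contained in any $(d-1)$-dimensional affine subspace, $\lambda\in(0,1)$, $S_i(\mathbf{x})=\lambda\mathbf{x}+(1-\lambda)\mathbf{p}_i$ with attractor $X$. If $\mathbf{a}\in\mathcal{D}^{\mathbb{N}}$ is a universal coding of $\mathbf{x}\in X$, then the set $\{T_{a_1\cdots a_j}(\mathbf{x}):j\ge1\}$ is dense in $X$.
   Context: $\mathcal{D}=\{0,\ldots,n\}$. $X$ is the unique non-empty compact set with $X=\bigcup_{i\in\mathcal{D}}S_i(X)$. The coding map is $\pi(\mathbf{a})=\lim_{j\to\infty}(S_{a_1}\circ\cdots\circ S_{a_j})(\mathbf{0})$; $\mathbf{a}$ is a coding of $\mathbf{x}$ if $\pi(\mathbf{a})=\mathbf{x}$. A sequence is universal if it contains every finite word over $\mathcal{D}$ as a block of consecutive digits. $T_i(\mathbf{x})=\frac{\mathbf{x}-(1-\lambda)\mathbf{p}_i}{\lambda}$ is the inverse of $S_i$, and $T_{a_1\cdots a_j}=T_{a_j}\circ\cdots\circ T_{a_1}$. *)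

theory Defs
  imports "HOL-Analysis.Analysis"
begin

definition Smap :: "real \<Rightarrow> (nat \<Rightarrow> 'a::real_vector) \<Rightarrow> nat \<Rightarrow> 'a \<Rightarrow> 'a" where
  "Smap lam p i x = lam *\<^sub>R x + (1 - lam) *\<^sub>R p i"

definition Tmap :: "real \<Rightarrow> (nat \<Rightarrow> 'a::real_vector) \<Rightarrow> nat \<Rightarrow> 'a \<Rightarrow> 'a" where
  "Tmap lam p i x = (1 / lam) *\<^sub>R (x - (1 - lam) *\<^sub>R p i)"

text \<open>Sequences a : nat => nat are 0-indexed: a k is the digit a_{k+1} of the paper.
  Scomp lam p a j = S_{a_1} o ... o S_{a_j}.\<close>
fun Scomp :: "real \<Rightarrow> (nat \<Rightarrow> 'a::real_vector) \<Rightarrow> (nat \<Rightarrow> nat) \<Rightarrow> nat \<Rightarrow> 'a \<Rightarrow> 'a" where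
  "Scomp lam p a 0 = id"
| "Scomp lam p a (Suc j) = Scomp lam p a j \<circ> Smap lam p (a j)"

text \<open>Tcomp lam p a j = T_{a_1 ... a_j} = T_{a_j} o ... o T_{a_1}.\<close>
fun Tcomp :: "real \<Rightarrow> (nat \<Rightarrow> 'a::real_vector) \<Rightarrow> (nat \<Rightarrow> nat) \<Rightarrow> nat \<Rightarrow> 'a \<Rightarrow> 'a" where
  "Tcomp lam p a 0 = id"
| "Tcomp lam p a (Suc j) = Tmap lam p (a j) \<circ> Tcomp lam p a j"

definition coding_map :: "real \<Rightarrow> (nat \<Rightarrow> 'a::real_normed_vector) \<Rightarrow> (nat \<Rightarrow> nat) \<Rightarrow> 'a" where
  "coding_map lam p a = lim (\<lambda>j. Scomp lam p a j 0)"

definition universal :: "nat \<Rightarrow> (nat \<Rightarrow> nat) \<Rightarrow> bool" where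
  "universal n a \<longleftrightarrow>
     (\<forall>w. set w \<subseteq> {0..n} \<longrightarrow> (\<exists>k. map a [k..<k + length w] = w))"

end

theory Submission
  imports Defs
begin

text \<open>Unwinding the maps, \<open>x = \<pi>(a)\<close> is the sum of the series
  \<open>\<Sum>\<^sub>k \<lambda>\<^sup>k (1 - \<lambda>) p(a\<^sub>k\<^sub>+\<^sub>1)\<close>, and \<open>T\<^sub>a\<^sub>1\<^sub>\<dots>\<^sub>a\<^sub>j(x)\<close> is the point coded by the shifted
  sequence \<open>a\<^sub>j\<^sub>+\<^sub>1 a\<^sub>j\<^sub>+\<^sub>2 \<dots>\<close>, hence lies in \<open>X\<close>. Conversely, every \<open>y \<in> X\<close> can be written as
  \<open>S\<^sub>c\<^sub>1 \<circ> \<dots> \<circ> S\<^sub>c\<^sub>m(z)\<close> with \<open>z \<in> X\<close>. By universality the word \<open>c\<^sub>1 \<dots> c\<^sub>m\<close> occurs as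
  \<open>a\<^sub>j\<^sub>+\<^sub>1 \<dots> a\<^sub>j\<^sub>+\<^sub>m\<close>, so \<open>T\<^sub>a\<^sub>1\<^sub>\<dots>\<^sub>a\<^sub>j(x) = S\<^sub>c\<^sub>1 \<circ> \<dots> \<circ> S\<^sub>c\<^sub>m(v)\<close> for some \<open>v \<in> X\<close>, which is
  within \<open>\<lambda>\<^sup>m diam X\<close> of \<open>y\<close>.\<close>

definition coding_sum :: "real \<Rightarrow> (nat \<Rightarrow> 'a::real_normed_vector) \<Rightarrow> (nat \<Rightarrow> nat) \<Rightarrow> 'a" where
  "coding_sum lam p b = (\<Sum>k. (lam ^ k * (1 - lam)) *\<^sub>R p (b k))"

lemma Scomp_eq_sum:
  "Scomp lam p b m w = lam ^ m *\<^sub>R w + (\<Sum>k<m. (lam ^ k * (1 - lam)) *\<^sub>R p (b k))"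
  by (induction m arbitrary: w) (simp_all add: Smap_def algebra_simps)

lemma Scomp_cong:
  assumes "\<And>i. i < m \<Longrightarrow> b i = c i"
  shows "Scomp lam p b m = Scomp lam p c m"
  using assms by (auto simp: Scomp_eq_sum intro!: sum.cong)

lemma Scomp_add:
  "Scomp lam p b (m + k) = Scomp lam p b m \<circ> Scomp lam p (\<lambda>i. b (i + m)) k"
  by (induction k) (simp_all add: add.commute)

lemma dist_Scomp:
  fixes p :: "nat \<Rightarrow> 'a::real_normed_vector"
  shows "dist (Scomp lam p b m v) (Scomp lam p b m w) = \<bar>lam\<bar> ^ m * dist v w"
  by (simp add: Scomp_eq_sum dist_norm power_abs flip: scaleR_diff_right del: dist_add_cancel2)

lemma tendsto_Scomp:
  fixes p :: "nat \<Rightarrow> 'a::real_normed_vector"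
  assumes "f \<longlonglongrightarrow> l"
  shows "(\<lambda>k. Scomp lam p b m (f k)) \<longlonglongrightarrow> Scomp lam p b m l"
  unfolding Scomp_eq_sum by (intro tendsto_add tendsto_scaleR tendsto_const assms)

lemma Tcomp_Scomp:
  assumes "lam \<noteq> 0"
  shows "Tcomp lam p a j (Scomp lam p a j w) = w"
  using assms by (induction j arbitrary: w) (auto simp: Tmap_def Smap_def)

lemma Scomp_mem:
  assumes "\<And>i. i \<in> D \<Longrightarrow> Smap lam p i ` X \<subseteq> X" "\<forall>k. b k \<in> D" "y \<in> X"
  shows "Scomp lam p b m y \<in> X"
  using assms(3) by (induction m arbitrary: y) (use assms(1,2) in auto)

lemma summable_coding_terms:
  fixes p :: "nat \<Rightarrow> 'a::banach"
  assumes "0 \<le> lam" "lam < 1" and bound: "\<And>k. norm (p (b k)) \<le> M"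
  shows "summable (\<lambda>k. (lam ^ k * (1 - lam)) *\<^sub>R p (b k))"
proof (rule summable_comparison_test)
  show "summable (\<lambda>k. lam ^ k * M)"
    using assms(1,2) by (intro summable_mult2 summable_geometric) auto
  have "lam ^ k * (1 - lam) * norm (p (b k)) \<le> lam ^ k * M" for k
    using assms(1,2) bound[of k]
    by (intro mult_mono) (auto simp: mult_left_le order_trans[OF norm_ge_zero bound])
  then show "\<exists>N. \<forall>k\<ge>N. norm ((lam ^ k * (1 - lam)) *\<^sub>R p (b k)) \<le> lam ^ k * M"
    using assms(1,2) by simp
qed

lemma LIMSEQ_Scomp_coding_sum:
  fixes p :: "nat \<Rightarrow> 'a::banach"
  assumes "0 \<le> lam" "lam < 1" "finite D" "\<forall>k. b k \<in> D"
  shows "(\<lambda>m. Scomp lam p b m w) \<longlonglongrightarrow> coding_sum lam p b"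
proof -
  have "norm (p (b k)) \<le> (\<Sum>i\<in>D. norm (p i))" for k
    using assms(3,4) by (intro member_le_sum) auto
  then have "(\<lambda>m. \<Sum>k<m. (lam ^ k * (1 - lam)) *\<^sub>R p (b k)) \<longlonglongrightarrow> coding_sum lam p b"
    unfolding coding_sum_def
    by (intro summable_LIMSEQ summable_coding_terms) (use assms in auto)
  moreover have "(\<lambda>m. lam ^ m *\<^sub>R w) \<longlonglongrightarrow> 0 *\<^sub>R w"
    by (intro tendsto_scaleR LIMSEQ_power_zero tendsto_const) (use assms(1,2) in auto)
  ultimately show ?thesis
    unfolding Scomp_eq_sum using tendsto_add by fastforce
qed

lemma coding_map_eq_coding_sum:
  fixes p :: "nat \<Rightarrow> 'a::banach"
  assumes "0 \<le> lam" "lam < 1" "finite D" "\<forall>k. b k \<in> D"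
  shows "coding_map lam p b = coding_sum lam p b"
  unfolding coding_map_def using LIMSEQ_Scomp_coding_sum[OF assms] by (rule limI)

lemma coding_sum_mem:
  fixes p :: "nat \<Rightarrow> 'a::banach"
  assumes "0 \<le> lam" "lam < 1" "finite D" "\<forall>k. b k \<in> D"
    and "closed X" "y \<in> X" "\<And>i. i \<in> D \<Longrightarrow> Smap lam p i ` X \<subseteq> X"
  shows "coding_sum lam p b \<in> X"
  by (rule closed_sequentially[OF assms(5) _ LIMSEQ_Scomp_coding_sum[OF assms(1-4), where w=y]])
    (use Scomp_mem assms(4,6,7) in blast)

lemma coding_sum_shift:
  fixes p :: "nat \<Rightarrow> 'a::banach"
  assumes "0 \<le> lam" "lam < 1" "finite D" "\<forall>k. b k \<in> D"
  shows "coding_sum lam p b = Scomp lam p b m (coding_sum lam p (\<lambda>i. b (i + m)))"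
proof (rule LIMSEQ_unique)
  show "(\<lambda>k. Scomp lam p b (k + m) 0) \<longlonglongrightarrow> coding_sum lam p b"
    using LIMSEQ_Scomp_coding_sum[OF assms] by (rule LIMSEQ_ignore_initial_segment)
  have "(\<lambda>k. Scomp lam p (\<lambda>i. b (i + m)) k 0) \<longlonglongrightarrow> coding_sum lam p (\<lambda>i. b (i + m))"
    using assms by (intro LIMSEQ_Scomp_coding_sum) auto
  then have "(\<lambda>k. Scomp lam p b m (Scomp lam p (\<lambda>i. b (i + m)) k 0))
      \<longlonglongrightarrow> Scomp lam p b m (coding_sum lam p (\<lambda>i. b (i + m)))"
    by (rule tendsto_Scomp)
  moreover have "Scomp lam p b (k + m) = Scomp lam p b m \<circ> Scomp lam p (\<lambda>i. b (i + m)) k" for k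
    using Scomp_add[of lam p b m k] by (simp only: add.commute)
  ultimately show "(\<lambda>k. Scomp lam p b (k + m) 0)
      \<longlonglongrightarrow> Scomp lam p b m (coding_sum lam p (\<lambda>i. b (i + m)))"
    by simp
qed

lemma Tcomp_coding_sum:
  fixes p :: "nat \<Rightarrow> 'a::banach"
  assumes "0 < lam" "lam < 1" "finite D" "\<forall>k. b k \<in> D"
  shows "Tcomp lam p b j (coding_sum lam p b) = coding_sum lam p (\<lambda>i. b (i + j))"
proof -
  have "lam \<noteq> 0" using assms(1) by simp
  then show ?thesis
    by (subst coding_sum_shift[OF less_imp_le[OF assms(1)] assms(2-4), of p j]) (rule Tcomp_Scomp)
qed

lemma attractor_Scomp_decomp:
  assumes "X = (\<Union>i\<in>D. Smap lam p i ` X)" "y \<in> X"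
  obtains c z where "\<forall>i. c i \<in> D" "z \<in> X" "y = Scomp lam p c m z"
proof -
  have "\<exists>c z. (\<forall>i. c i \<in> D) \<and> z \<in> X \<and> y = Scomp lam p c m z"
  proof (induction m)
    case 0
    from assms obtain i where "i \<in> D" by blast
    then show ?case using assms(2) by (intro exI[of _ "\<lambda>_. i"] exI[of _ y]) auto
  next
    case (Suc m)
    then obtain c z where c: "\<forall>i. c i \<in> D" and "z \<in> X" and y: "y = Scomp lam p c m z"
      by blast
    then obtain i z' where "i \<in> D" "z' \<in> X" and z: "z = Smap lam p i z'"
      using assms(1) by blast
    have "Scomp lam p (c(m := i)) m = Scomp lam p c m"
      by (rule Scomp_cong) simp
    then have "y = Scomp lam p (c(m := i)) (Suc m) z'"
      using y z by (simp only: Scomp.simps comp_apply fun_upd_same)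
    moreover have "\<forall>i'. (c(m := i)) i' \<in> D"
      using c \<open>i \<in> D\<close> by simp
    ultimately show ?case using \<open>z' \<in> X\<close> by blast
  qed
  then show ?thesis using that by blast
qed

lemma universal_block:
  assumes "universal n a" "\<forall>i<m. c i \<in> {0..n}"
  obtains j where "j \<ge> 1" "\<forall>i<m. a (j + i) = c i"
proof -
  define w where "w = 0 # map c [0..<m]"
  \<comment> \<open>the dummy leading digit makes the block for \<open>c\<close> start at a positive position\<close>
  have "set w \<subseteq> {0..n}" using assms(2) by (auto simp: w_def)
  then obtain k where k: "map a [k..<k + length w] = w"
    using assms(1) unfolding universal_def by blast
  have "a (Suc k + i) = c i" if "i < m" for i
  proof -
    have "a (k + Suc i) = map a [k..<k + length w] ! Suc i"
      using that by (simp add: w_def del: upt_Suc)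
    also have "\<dots> = w ! Suc i" using k by simp
    also have "\<dots> = c i" using that by (simp add: w_def del: upt_Suc)
    finally show ?thesis by simp
  qed
  then show ?thesis by (intro that[of "Suc k"]) auto
qed

lemma Tcomp_orbit_approximates:
  fixes p :: "nat \<Rightarrow> 'a::banach"
  assumes lam: "0 < lam" "lam < 1"
    and X: "compact X" "X = (\<Union>i\<in>{0..n}. Smap lam p i ` X)"
    and digits: "\<forall>k. a k \<in> {0..n}" and univ: "universal n a"
    and "y \<in> X" "0 < e"
  obtains j where "j \<ge> 1" "dist (Tcomp lam p a j (coding_sum lam p a)) y < e"
proof -
  have bounded: "bounded X" using X(1) by (rule compact_imp_bounded)
  have inv: "\<And>i. i \<in> {0..n} \<Longrightarrow> Smap lam p i ` X \<subseteq> X" using X(2) by blast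
  obtain m where m: "lam ^ m < e / (diameter X + 1)"
    using real_arch_pow_inv[of "e / (diameter X + 1)" lam] lam \<open>0 < e\<close> diameter_ge_0[OF bounded]
    by auto
  obtain c z where c: "\<forall>i. c i \<in> {0..n}" and "z \<in> X" and y: "y = Scomp lam p c m z"
    using attractor_Scomp_decomp[OF X(2) \<open>y \<in> X\<close>] .
  obtain j where "j \<ge> 1" and block: "\<forall>i<m. a (j + i) = c i"
    using universal_block[OF univ] c by blast
  define v where "v = coding_sum lam p (\<lambda>i. a (i + m + j))"
  have "v \<in> X"
    unfolding v_def using digits lam compact_imp_closed[OF X(1)] \<open>y \<in> X\<close> inv
    by (intro coding_sum_mem[where D="{0..n}"]) auto
  have "Tcomp lam p a j (coding_sum lam p a) = Scomp lam p (\<lambda>i. a (i + j)) m v"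
    unfolding v_def Tcomp_coding_sum[OF lam finite_atLeastAtMost digits]
    using digits lam by (subst coding_sum_shift[where D="{0..n}"]) (auto simp: add.assoc)
  also have "\<dots> = Scomp lam p c m v"
    using block by (intro fun_cong[OF Scomp_cong]) (simp add: add.commute)
  finally have "dist (Tcomp lam p a j (coding_sum lam p a)) y = lam ^ m * dist v z"
    using lam by (simp add: y dist_Scomp)
  also have "\<dots> \<le> lam ^ m * diameter X"
    using lam bounded \<open>v \<in> X\<close> \<open>z \<in> X\<close> by (intro mult_left_mono diameter_bounded_bound) auto
  also have "\<dots> < e"
    using m diameter_ge_0[OF bounded] lam
    by (smt (verit) pos_less_divide_eq mult_left_mono zero_le_power)
  finally show ?thesis using that \<open>j \<ge> 1\<close> by blast
qed

theorem lemma5p1: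
  fixes n :: nat and lam :: real and p :: "nat \<Rightarrow> 'a::euclidean_space"
    and X :: "'a set" and a :: "nat \<Rightarrow> nat" and x :: 'a
  assumes affine_span: "affine hull (p ` {0..n}) = UNIV"
    and lam: "0 < lam" "lam < 1"
    and X_attr: "compact X" "X \<noteq> {}" "X = (\<Union>i\<in>{0..n}. Smap lam p i ` X)"
    and digits: "\<forall>k. a k \<in> {0..n}"
    and univ: "universal n a"
    and xX: "x \<in> X"
    and coding: "coding_map lam p a = x"
  shows "closure {Tcomp lam p a j x | j. j \<ge> 1} = X"
proof
  have x: "x = coding_sum lam p a"
    using coding_map_eq_coding_sum[OF less_imp_le[OF lam(1)] lam(2) finite_atLeastAtMost digits,
        where p=p] coding
    by simp
  have inv: "\<And>i. i \<in> {0..n} \<Longrightarrow> Smap lam p i ` X \<subseteq> X" using X_attr(3) by blast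
  have "Tcomp lam p a j x \<in> X" for j
    unfolding x Tcomp_coding_sum[OF lam finite_atLeastAtMost digits]
    using lam digits compact_imp_closed[OF X_attr(1)] xX inv
    by (intro coding_sum_mem[where D="{0..n}"]) auto
  then show "closure {Tcomp lam p a j x | j. j \<ge> 1} \<subseteq> X"
    using compact_imp_closed[OF X_attr(1)] by (intro closure_minimal) auto
  show "X \<subseteq> closure {Tcomp lam p a j x | j. j \<ge> 1}"
  proof
    fix y assume "y \<in> X"
    have "\<exists>x'\<in>{Tcomp lam p a j x | j. j \<ge> 1}. dist x' y < e" if "0 < e" for e
      using Tcomp_orbit_approximates[OF lam X_attr(1,3) digits univ \<open>y \<in> X\<close> that] x by blast
    then show "y \<in> closure {Tcomp lam p a j x | j. j \<ge> 1}"
      by (simp add: closure_approachable)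
  qed
qed

end
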